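(* For all $n\ge2$, the number of permutations in $\mathcal{S}_n$ avoiding each of $1243$, $2143$ and $231$ equals $(n+2)2^{n-3}$.
   Context: A permutation $\pi\in\mathcal{S}_n$ avoids $\tau\in\mathcal{S}_k$ if there are no indices $i_1<\dots<i_k$ with $\pi_{i_1}\cdots\pi_{i_k}$ in the same relative order as $\tau_1\cdots\tau_k$. *)

theory Defs
  imports Complex_Main
begin

definition perms :: "nat \<Rightarrow> nat list set" where
  "perms n = {xs. distinct xs \<and> set xs = {1..n}}"

definition contains :: "nat list \<Rightarrow> nat list \<Rightarrow> bool" where
  "contains p tau \<longleftrightarrow>
     (\<exists>idx :: nat \<Rightarrow> nat.
        (\<forall>a b. a < b \<and> b < length tau \<longrightarrow> idx a < idx b) \<and>
        (\<forall>a < length tau. idx a < length p) \<and>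
        (\<forall>a < length tau. \<forall>b < length tau.
            (p ! idx a < p ! idx b) \<longleftrightarrow> (tau ! a < tau ! b)))"

definition avoids :: "nat list \<Rightarrow> nat list \<Rightarrow> bool" where
  "avoids p tau \<longleftrightarrow> \<not> contains p tau"

end

(*
  Locate the maximum n of a permutation p avoiding 1243, 2143 and 231. If it stands first or
  last, deleting it leaves an arbitrary such permutation of length n - 1. Otherwise 231-avoidance
  makes every entry before n smaller than every entry after it, and a second entry before n would
  complete a 1243 or a 2143; so p = 1 n r, where r (shifted down by one) must avoid 132, since
  1 n r would otherwise contain 1243, and 231. The same deletion argument shows that there are
  2^(m-1) permutations of length m avoiding 132 and 231. Hence a(n) = 2 a(n-1) + 2^(n-3) for
  n >= 3 and a(2) = 2, which gives a(n) = (n+2) 2^(n-3).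
*)

theory Submission
  imports Defs "HOL-Library.Sublist"
begin

definition order_isomorphic :: "nat list \<Rightarrow> nat list \<Rightarrow> bool" where
  "order_isomorphic q tau \<longleftrightarrow> length q = length tau \<and>
     (\<forall>a < length tau. \<forall>b < length tau. q ! a < q ! b \<longleftrightarrow> tau ! a < tau ! b)"

lemma subseq_map_nth:
  assumes "sorted_wrt (<) ks" "\<forall>i \<in> set ks. i < length p"
  shows "subseq (map ((!) p) ks) p"
  using assms
proof (induction p arbitrary: ks)
  case Nil
  then show ?case by (cases "ks") auto
next
  case (Cons x p)
  define js where "js = map (\<lambda>i. i - 1) (filter (\<lambda>i. 0 < i) ks)"
  have "sorted_wrt (<) (filter (\<lambda>i. 0 < i) ks)"
    using Cons.prems(1) by (simp add: sorted_wrt_filter)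
  then have "sorted_wrt (\<lambda>i j. i - 1 < j - 1) (filter (\<lambda>i. 0 < i) ks)"
    by (rule sorted_wrt_mono_rel[rotated]) auto
  then have js: "sorted_wrt (<) js" "\<forall>j \<in> set js. j < length p"
    using Cons.prems(2) unfolding js_def by (auto simp: sorted_wrt_map)
  then have IH: "subseq (map ((!) p) js) p" by (rule Cons.IH)
  have shift: "map ((!) (x # p)) (filter (\<lambda>i. 0 < i) ks) = map ((!) p) js"
    unfolding js_def by (auto simp: nth_Cons')
  show ?case
  proof (cases "0 \<in> set ks")
    case True
    then obtain ks' where "ks = 0 # ks'" using Cons.prems(1) by (cases "ks") (auto)
    moreover have "filter (\<lambda>i. 0 < i) ks' = ks'"
      using Cons.prems(1) \<open>ks = 0 # ks'\<close> by (auto intro: filter_True)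
    ultimately show ?thesis using shift IH by auto
  next
    case False
    then have "filter (\<lambda>i. 0 < i) ks = ks" by (intro filter_True) (metis gr0I)
    then show ?thesis using shift IH by auto
  qed
qed

lemma subseq_indicesE:
  assumes "subseq q p"
  obtains ks where "sorted_wrt (<) ks" "\<forall>i \<in> set ks. i < length p" "q = map ((!) p) ks"
proof -
  from assms
  have "\<exists>ks. sorted_wrt (<) ks \<and> (\<forall>i \<in> set ks. i < length p) \<and> q = map ((!) p) ks"
  proof (induction rule: list_emb.induct)
    case (list_emb_Nil ys)
    show ?case by (intro exI[of _ "[]"]) simp
  next
    case (list_emb_Cons xs ys y)
    then obtain ks
      where "sorted_wrt (<) ks" "\<forall>i \<in> set ks. i < length ys" "xs = map ((!) ys) ks"
      by blast
    then show ?case by (intro exI[of _ "map Suc ks"]) (auto simp: sorted_wrt_map)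
  next
    case (list_emb_Cons2 x y xs ys)
    then obtain ks
      where "sorted_wrt (<) ks" "\<forall>i \<in> set ks. i < length ys" "xs = map ((!) ys) ks"
      by blast
    then show ?case
      using list_emb_Cons2.hyps(1) by (intro exI[of _ "0 # map Suc ks"]) (auto simp: sorted_wrt_map)
  qed
  then show ?thesis using that by blast
qed

lemma contains_iff_subseq:
  "contains p tau \<longleftrightarrow> (\<exists>q. subseq q p \<and> order_isomorphic q tau)"
proof
  assume "contains p tau"
  then obtain idx where incr: "\<And>a b. a < b \<Longrightarrow> b < length tau \<Longrightarrow> idx a < idx b"
    and bound: "\<And>a. a < length tau \<Longrightarrow> idx a < length p"
    and iso: "\<And>a b. a < length tau \<Longrightarrow> b < length tau \<Longrightarrow>
                p ! idx a < p ! idx b \<longleftrightarrow> tau ! a < tau ! b"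
    unfolding contains_def by blast
  define ks where "ks = map idx [0..<length tau]"
  have "sorted_wrt (<) ks"
    unfolding ks_def by (auto simp: sorted_wrt_map sorted_wrt_iff_nth_less incr)
  moreover have "\<forall>i \<in> set ks. i < length p" unfolding ks_def using bound by auto
  ultimately have "subseq (map ((!) p) ks) p" by (rule subseq_map_nth)
  moreover have "order_isomorphic (map ((!) p) ks) tau"
    unfolding order_isomorphic_def ks_def using iso by simp
  ultimately show "\<exists>q. subseq q p \<and> order_isomorphic q tau" by blast
next
  assume "\<exists>q. subseq q p \<and> order_isomorphic q tau"
  then obtain q where "subseq q p" and iso: "order_isomorphic q tau" by blast
  from \<open>subseq q p\<close> obtain ks
    where "sorted_wrt (<) ks" "\<forall>i \<in> set ks. i < length p" "q = map ((!) p) ks"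
    by (rule subseq_indicesE)
  with iso show "contains p tau"
    unfolding contains_def order_isomorphic_def
    by (intro exI[of _ "(!) ks"]) (auto simp: sorted_wrt_iff_nth_less)
qed

lemma containsI: "subseq q p \<Longrightarrow> order_isomorphic q tau \<Longrightarrow> contains p tau"
  unfolding contains_iff_subseq by blast

lemma contains_subseq: "contains q tau \<Longrightarrow> subseq q p \<Longrightarrow> contains p tau"
  unfolding contains_iff_subseq by (meson subseq_order.trans)

lemma contains_map_strict_mono:
  assumes "strict_mono f"
  shows "contains (map f p) tau \<longleftrightarrow> contains p tau"
proof -
  have "map f p ! i < map f p ! j \<longleftrightarrow> p ! i < p ! j" if "i < length p" "j < length p" for i j
    using that assms by (simp add: strict_mono_less)
  then show ?thesis
    unfolding contains_def by (intro ex_cong1 conj_cong refl) auto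
qed

lemma subseq_set_subset: "subseq q p \<Longrightarrow> set q \<subseteq> set p"
  by (induction rule: list_emb.induct) auto

lemma order_isomorphic_length: "order_isomorphic q tau \<Longrightarrow> length q = length tau"
  unfolding order_isomorphic_def by blast

lemma order_isomorphic_nth_less:
  "order_isomorphic q tau \<Longrightarrow> a < length tau \<Longrightarrow> b < length tau \<Longrightarrow>
    q ! a < q ! b \<longleftrightarrow> tau ! a < tau ! b"
  unfolding order_isomorphic_def by blast

lemma contains_ConsD:
  assumes "contains (z # p) tau"
  shows "contains p tau \<or> (\<exists>q. subseq q p \<and> order_isomorphic (z # q) tau)"
proof -
  obtain q where q: "subseq q (z # p)" "order_isomorphic q tau"
    using assms unfolding contains_iff_subseq by blast
  show ?thesis
  proof (cases q)
    case Nil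
    then show ?thesis using q by (auto intro: containsI)
  next
    case (Cons x q')
    then show ?thesis using q by (cases "x = z") (auto intro: containsI)
  qed
qed

lemma contains_snocD:
  assumes "contains (p @ [z]) tau"
  shows "contains p tau \<or> (\<exists>q. subseq q p \<and> order_isomorphic (q @ [z]) tau)"
proof -
  obtain q where sub: "subseq q (p @ [z])" and iso: "order_isomorphic q tau"
    using assms unfolding contains_iff_subseq by blast
  from sub obtain q1 q2 where q: "q = q1 @ q2" "subseq q1 p" "subseq q2 [z]"
    by (rule subseq_appendE)
  then have "q2 = [] \<or> q2 = [z]"
    by (cases q2) (auto split: if_splits dest: list_emb_Nil2)
  then show ?thesis using q iso by (auto intro: containsI)
qed

lemma contains_Cons_greaterD:
  assumes "contains (z # p) tau" "\<forall>x \<in> set p. x < z" "y \<in> set tau" "hd tau < y"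
  shows "contains p tau"
proof -
  obtain i where "i < length tau" "tau ! i = y" using assms(3) by (auto simp: in_set_conv_nth)
  moreover from this have "hd tau = tau ! 0" by (intro hd_conv_nth) auto
  ultimately have i: "i < length tau" "tau ! 0 < tau ! i" using assms(4) by auto
  have "\<not> order_isomorphic (z # q) tau" if "subseq q p" for q
  proof
    assume iso: "order_isomorphic (z # q) tau"
    then have extremal: "z < (z # q) ! i" using i order_isomorphic_nth_less[of _ _ 0 i] by fastforce
    have "0 < i" using i(2) by (cases i) auto
    with i(1) order_isomorphic_length[OF iso] have "(z # q) ! i \<in> set q" by (simp add: nth_Cons')
    with extremal show False using assms(2) subseq_set_subset[OF \<open>subseq q p\<close>] by fastforce
  qed
  then show ?thesis using contains_ConsD[OF assms(1)] by blast
qed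

lemma contains_Cons_lessD:
  assumes "contains (z # p) tau" "\<forall>x \<in> set p. z < x" "y \<in> set tau" "y < hd tau"
  shows "contains p tau"
proof -
  obtain i where "i < length tau" "tau ! i = y" using assms(3) by (auto simp: in_set_conv_nth)
  moreover from this have "hd tau = tau ! 0" by (intro hd_conv_nth) auto
  ultimately have i: "i < length tau" "tau ! i < tau ! 0" using assms(4) by auto
  have "\<not> order_isomorphic (z # q) tau" if "subseq q p" for q
  proof
    assume iso: "order_isomorphic (z # q) tau"
    then have extremal: "(z # q) ! i < z" using i order_isomorphic_nth_less[of _ _ i 0] by fastforce
    have "0 < i" using i(2) by (cases i) auto
    with i(1) order_isomorphic_length[OF iso] have "(z # q) ! i \<in> set q" by (simp add: nth_Cons')
    with extremal show False using assms(2) subseq_set_subset[OF \<open>subseq q p\<close>] by fastforce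
  qed
  then show ?thesis using contains_ConsD[OF assms(1)] by blast
qed

lemma contains_snoc_greaterD:
  assumes "contains (p @ [z]) tau" "\<forall>x \<in> set p. x < z" "y \<in> set tau" "last tau < y"
  shows "contains p tau"
proof -
  obtain i where "i < length tau" "tau ! i = y" using assms(3) by (auto simp: in_set_conv_nth)
  with assms(4) have i: "i < length tau" "last tau < tau ! i" by auto
  have "\<not> order_isomorphic (q @ [z]) tau" if "subseq q p" for q
  proof
    assume iso: "order_isomorphic (q @ [z]) tau"
    then have len: "length tau = Suc (length q)" by (simp add: order_isomorphic_def)
    then have "tau ! length q < tau ! i" using i(2) last_conv_nth[of tau] by fastforce
    with iso len i(1) have extremal: "z < (q @ [z]) ! i"
      using order_isomorphic_nth_less[of _ _ "length q" i] by fastforce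
    have "i \<noteq> length q" using \<open>tau ! length q < tau ! i\<close> by auto
    with i(1) len have "(q @ [z]) ! i \<in> set q" by (simp add: nth_append)
    with extremal show False using assms(2) subseq_set_subset[OF \<open>subseq q p\<close>] by fastforce
  qed
  then show ?thesis using contains_snocD[OF assms(1)] by blast
qed

lemmas order_isomorphic_unfold =
  order_isomorphic_def length_Cons list.size(3) All_less_Suc2 nth_Cons_0 nth_Cons_Suc
  length_Suc_conv length_0_conv

lemma contains_132_iff: "contains p [1,3,2] \<longleftrightarrow> (\<exists>a b c. subseq [a,b,c] p \<and> a < c \<and> c < b)"
  unfolding contains_iff_subseq by (simp only: order_isomorphic_unfold) (auto; blast)

lemma contains_231_iff: "contains p [2,3,1] \<longleftrightarrow> (\<exists>x y z. subseq [x,y,z] p \<and> z < x \<and> x < y)"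
  unfolding contains_iff_subseq by (simp only: order_isomorphic_unfold) (auto; blast)

lemma contains_1243_iff:
  "contains p [1,2,4,3] \<longleftrightarrow> (\<exists>a b c d. subseq [a,b,c,d] p \<and> a < b \<and> b < d \<and> d < c)"
  unfolding contains_iff_subseq by (simp only: order_isomorphic_unfold) (auto; blast)

lemma contains_2143_iff:
  "contains p [2,1,4,3] \<longleftrightarrow> (\<exists>a b c d. subseq [a,b,c,d] p \<and> b < a \<and> a < d \<and> d < c)"
  unfolding contains_iff_subseq by (simp only: order_isomorphic_unfold) (auto; blast)

lemma subseq_Cons_ConsD: "subseq (x # q) (y # p) \<Longrightarrow> subseq q p"
  by (metis subseq_Cons' subseq_Cons2_iff)

lemma contains_132_if_Cons_contains:
  shows "contains (z # p) [1,2,4,3] \<Longrightarrow> contains p [1,3,2]"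
    and "contains (z # p) [2,1,4,3] \<Longrightarrow> contains p [1,3,2]"
proof -
  have tail: "contains p [1,3,2]" if "subseq [a,b,c,d] (z # p)" "b < d" "d < c" for a b c d
    unfolding contains_132_iff using subseq_Cons_ConsD[OF that(1)] that(2,3) by blast
  show "contains (z # p) [1,2,4,3] \<Longrightarrow> contains p [1,3,2]"
    unfolding contains_1243_iff by (elim exE conjE tail)
  show "contains (z # p) [2,1,4,3] \<Longrightarrow> contains p [1,3,2]"
    unfolding contains_2143_iff by (elim exE conjE tail) simp
qed

lemma contains_1243_if_Cons_less:
  assumes "\<forall>x \<in> set p. z < x" "contains p [1,3,2]"
  shows "contains (z # p) [1,2,4,3]"
proof -
  obtain a b c where "subseq [a,b,c] p" "a < c" "c < b"
    using assms(2) unfolding contains_132_iff by blast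
  moreover have "z < a" using assms(1) subseq_set_subset[OF \<open>subseq [a,b,c] p\<close>] by simp
  moreover have "subseq [z,a,b,c] (z # p)" using \<open>subseq [a,b,c] p\<close> by simp
  ultimately show ?thesis unfolding contains_1243_iff by blast
qed

lemma subseq_append_Cons: "subseq u a \<Longrightarrow> subseq v b \<Longrightarrow> subseq (u @ z # v) (a @ z # b)"
  by (simp add: list_emb_append_mono)

lemma finite_perms: "finite (perms n)"
proof (rule finite_subset)
  show "perms n \<subseteq> {xs. set xs \<subseteq> {1..n} \<and> length xs = n}"
    unfolding perms_def using distinct_card by fastforce
  show "finite {xs. set xs \<subseteq> {1..n} \<and> length xs = n}"
    by (rule finite_lists_length_eq) simp
qed

lemma perms_0: "perms 0 = {[]}"
  unfolding perms_def by auto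

lemma perms_1: "perms 1 = {[1]}"
proof -
  have "xs = [1]" if "distinct xs" "set xs = {1}" for xs :: "nat list"
  proof -
    have "length xs = 1" using distinct_card[OF that(1)] that(2) by simp
    then show ?thesis using that(2) by (cases xs) auto
  qed
  then show ?thesis unfolding perms_def by auto
qed

lemma perms_le: "p \<in> perms n \<Longrightarrow> x \<in> set p \<Longrightarrow> x \<le> n"
  unfolding perms_def by auto

lemma perms_insert_max_iff: "a @ Suc n # b \<in> perms (Suc n) \<longleftrightarrow> a @ b \<in> perms n"
proof -
  have "{1..Suc n} = insert (Suc n) {1..n}" by auto
  then have "a @ Suc n # b \<in> perms (Suc n) \<longleftrightarrow>
      distinct (a @ b) \<and> Suc n \<notin> set (a @ b) \<and>
      insert (Suc n) (set (a @ b)) = insert (Suc n) {1..n}"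
    unfolding perms_def by auto
  also have "\<dots> \<longleftrightarrow> distinct (a @ b) \<and> Suc n \<notin> set (a @ b) \<and> set (a @ b) = {1..n}"
    using insert_ident[of "Suc n" "set (a @ b)" "{1..n}"] by auto
  also have "\<dots> \<longleftrightarrow> a @ b \<in> perms n"
    unfolding perms_def by (auto simp del: set_append)
  finally show ?thesis .
qed

lemma Cons_1_perms_Suc_iff: "1 # b \<in> perms (Suc n) \<longleftrightarrow> (\<exists>q \<in> perms n. b = map Suc q)"
proof
  assume "1 # b \<in> perms (Suc n)"
  then have "distinct b" "1 \<notin> set b" "insert 1 (set b) = {1..Suc n}" unfolding perms_def by auto
  moreover have "{1..Suc n} - {1} = {2..Suc n}" by auto
  ultimately have b: "distinct b" "set b = {2..Suc n}" by (metis Diff_insert_absorb)+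
  define q where "q = map (\<lambda>x. x - 1) b"
  have q: "map Suc q = b" unfolding q_def map_map by (rule map_idI) (use b(2) in auto)
  have "Suc ` set q = Suc ` {1..n}" using b(2) by (simp flip: q)
  then have "set q = {1..n}" by (meson inj_Suc inj_image_eq_iff)
  with b(1) q have "q \<in> perms n" unfolding perms_def by (auto simp: distinct_map)
  with q show "\<exists>q \<in> perms n. b = map Suc q" by blast
next
  assume "\<exists>q \<in> perms n. b = map Suc q"
  then obtain q where q: "distinct q" "set q = {1..n}" "b = map Suc q" unfolding perms_def by blast
  have "distinct (1 # b)" using q by (auto simp: distinct_map)
  moreover have "set (1 # b) = {1..Suc n}" using q(2,3) by (simp add: atLeastAtMost_insertL)
  ultimately show "1 # b \<in> perms (Suc n)" unfolding perms_def by blast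
qed

definition perms_avoiding :: "nat list list \<Rightarrow> nat \<Rightarrow> nat list set" where
  "perms_avoiding taus n = {p \<in> perms n. \<forall>tau \<in> set taus. avoids p tau}"

lemma perms_avoiding_subset: "perms_avoiding taus n \<subseteq> perms n"
  unfolding perms_avoiding_def by blast

lemma finite_perms_avoiding: "finite (perms_avoiding taus n)"
  using perms_avoiding_subset finite_perms by (rule finite_subset)

lemma avoids_if_shorter: "length p < length tau \<Longrightarrow> avoids p tau"
  unfolding avoids_def contains_iff_subseq
  by (auto dest: list_emb_length order_isomorphic_length)

lemma perms_avoiding_1:
  assumes "\<forall>tau \<in> set taus. 1 < length tau"
  shows "perms_avoiding taus 1 = {[1]}"
  using assms avoids_if_shorter unfolding perms_avoiding_def perms_1 by auto

lemma perms_avoiding_Cons_max_iff: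
  assumes "\<forall>tau \<in> set taus. \<exists>y \<in> set tau. hd tau < y"
  shows "Suc n # p \<in> perms_avoiding taus (Suc n) \<longleftrightarrow> p \<in> perms_avoiding taus n"
proof -
  have perm: "Suc n # p \<in> perms (Suc n) \<longleftrightarrow> p \<in> perms n"
    using perms_insert_max_iff[of "[]"] by simp
  have "contains (Suc n # p) tau \<longleftrightarrow> contains p tau"
    if p: "p \<in> perms n" and tau: "tau \<in> set taus" for tau
  proof
    have "\<forall>x \<in> set p. x < Suc n" using p unfolding perms_def by auto
    moreover obtain y where "y \<in> set tau" "hd tau < y" using assms tau by blast
    ultimately show "contains (Suc n # p) tau \<Longrightarrow> contains p tau"
      using contains_Cons_greaterD by blast
    show "contains p tau \<Longrightarrow> contains (Suc n # p) tau"
      by (erule contains_subseq) auto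
  qed
  with perm show ?thesis unfolding perms_avoiding_def avoids_def by auto
qed

lemma perms_avoiding_snoc_max_iff:
  assumes "\<forall>tau \<in> set taus. \<exists>y \<in> set tau. last tau < y"
  shows "p @ [Suc n] \<in> perms_avoiding taus (Suc n) \<longleftrightarrow> p \<in> perms_avoiding taus n"
proof -
  have perm: "p @ [Suc n] \<in> perms (Suc n) \<longleftrightarrow> p \<in> perms n"
    using perms_insert_max_iff[of p n "[]"] by simp
  have "contains (p @ [Suc n]) tau \<longleftrightarrow> contains p tau"
    if p: "p \<in> perms n" and tau: "tau \<in> set taus" for tau
  proof
    have "\<forall>x \<in> set p. x < Suc n" using p unfolding perms_def by auto
    moreover obtain y where "y \<in> set tau" "last tau < y" using assms tau by blast
    ultimately show "contains (p @ [Suc n]) tau \<Longrightarrow> contains p tau"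
      using contains_snoc_greaterD by blast
    show "contains p tau \<Longrightarrow> contains (p @ [Suc n]) tau"
      by (erule contains_subseq) (simp add: subseq_rev_drop_many)
  qed
  with perm show ?thesis unfolding perms_avoiding_def avoids_def by auto
qed

lemma perms_avoiding_Suc_cases:
  assumes "\<forall>tau \<in> set taus. \<exists>y \<in> set tau. hd tau < y"
    and "\<forall>tau \<in> set taus. \<exists>y \<in> set tau. last tau < y"
    and "p \<in> perms_avoiding taus (Suc n)"
  obtains (Cons) q where "q \<in> perms_avoiding taus n" "p = Suc n # q"
    | (snoc) q where "q \<in> perms_avoiding taus n" "p = q @ [Suc n]"
    | (inside) a b where "p = a @ Suc n # b" "a \<noteq> []" "b \<noteq> []"
proof -
  have "Suc n \<in> set p" using assms(3) unfolding perms_avoiding_def perms_def by auto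
  then obtain a b where p: "p = a @ Suc n # b" by (meson split_list)
  show thesis
  proof (cases "a = []")
    case True
    then show thesis using p assms(3) perms_avoiding_Cons_max_iff[OF assms(1)] Cons by auto
  next
    case False
    show thesis
    proof (cases "b = []")
      case True
      then show thesis using p assms(3) perms_avoiding_snoc_max_iff[OF assms(2)] snoc by auto
    qed (use False p inside in blast)
  qed
qed

lemma card_Cons_snoc_image:
  assumes "X \<subseteq> perms n" "0 < n"
  shows "card ((\<lambda>p. Suc n # p) ` X \<union> (\<lambda>p. p @ [Suc n]) ` X) = 2 * card X"
proof -
  have "finite X" using assms(1) finite_perms finite_subset by blast
  moreover have "(\<lambda>p. Suc n # p) ` X \<inter> (\<lambda>p. p @ [Suc n]) ` X = {}"
  proof -
    have "Suc n # p \<noteq> q @ [Suc n]" if "q \<in> perms n" for p q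
    proof -
      have "q \<noteq> []" "Suc n \<notin> set q" using that assms(2) unfolding perms_def by auto
      then show ?thesis by (cases q) auto
    qed
    then show ?thesis using assms(1) by blast
  qed
  ultimately have "card ((\<lambda>p. Suc n # p) ` X \<union> (\<lambda>p. p @ [Suc n]) ` X)
      = card ((\<lambda>p. Suc n # p) ` X) + card ((\<lambda>p. p @ [Suc n]) ` X)"
    by (intro card_Un_disjoint) auto
  also have "\<dots> = 2 * card X"
    by (simp add: card_image inj_on_def)
  finally show ?thesis .
qed

abbreviation av_132_231 :: "nat \<Rightarrow> nat list set" where
  "av_132_231 \<equiv> perms_avoiding [[1,3,2], [2,3,1]]"

lemma av_132_231_Suc:
  "av_132_231 (Suc n) = (\<lambda>p. Suc n # p) ` av_132_231 n \<union> (\<lambda>p. p @ [Suc n]) ` av_132_231 n"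
  (is "?T = ?C \<union> ?L")
proof
  have first: "\<forall>tau \<in> set [[1,3,2], [2,3,1::nat]]. \<exists>y \<in> set tau. hd tau < y"
    and last: "\<forall>tau \<in> set [[1,3,2], [2,3,1::nat]]. \<exists>y \<in> set tau. last tau < y"
    by simp_all
  show "?C \<union> ?L \<subseteq> ?T"
    using perms_avoiding_Cons_max_iff[OF first] perms_avoiding_snoc_max_iff[OF last] by auto
  show "?T \<subseteq> ?C \<union> ?L"
  proof
    fix p assume p: "p \<in> ?T"
    from first last p show "p \<in> ?C \<union> ?L"
    proof (cases rule: perms_avoiding_Suc_cases)
      case (inside a b)
      then obtain x y where "x \<in> set a" "y \<in> set b" by (meson hd_in_set)
      then have sub: "subseq [x, Suc n, y] p"
        using inside(1) subseq_append_Cons[of "[x]" a "[y]" b] by (simp add: subseq_singleton_left)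
      have ab: "a @ b \<in> perms n"
        using p inside(1) perms_insert_max_iff unfolding perms_avoiding_def by simp
      then have "x \<noteq> y" "x < Suc n" "y < Suc n"
        using \<open>x \<in> set a\<close> \<open>y \<in> set b\<close> perms_le[OF ab] unfolding perms_def by fastforce+
      then have "contains p [1,3,2] \<or> contains p [2,3,1]"
        using sub unfolding contains_132_iff contains_231_iff by (metis linorder_neqE_nat)
      with p show ?thesis unfolding perms_avoiding_def avoids_def by auto
    qed auto
  qed
qed

lemma card_av_132_231: "0 < n \<Longrightarrow> card (av_132_231 n) = 2 ^ (n - 1)"
proof (induction n rule: nat_induct_non_zero)
  case 1
  then show ?case using perms_avoiding_1[of "[[1,3,2], [2,3,1]]"] by simp
next
  case (Suc n)
  then show ?case
    using av_132_231_Suc card_Cons_snoc_image[OF perms_avoiding_subset] by (simp add: power_eq_if)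
qed

abbreviation av_1243_2143_231 :: "nat \<Rightarrow> nat list set" where
  "av_1243_2143_231 \<equiv> perms_avoiding [[1,2,4,3], [2,1,4,3], [2,3,1]]"

lemma av_1243_2143_231_prefix_of_max:
  assumes "a @ Suc n # b \<in> av_1243_2143_231 (Suc n)" "a \<noteq> []" "b \<noteq> []"
  shows "a = [1]"
proof -
  let ?p = "a @ Suc n # b"
  have ab: "a @ b \<in> perms n" using assms(1) perms_insert_max_iff unfolding perms_avoiding_def by simp
  have avoid: "\<not> contains ?p [1,2,4,3]" "\<not> contains ?p [2,1,4,3]" "\<not> contains ?p [2,3,1]"
    using assms(1) unfolding perms_avoiding_def avoids_def by auto
  have below: "x < y" if "x \<in> set a" "y \<in> set b" for x y
  proof (rule ccontr)
    have "x \<noteq> y" "x < Suc n" using ab that perms_le[OF ab] unfolding perms_def by fastforce+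
    moreover assume "\<not> x < y"
    ultimately have "y < x" "x < Suc n" by auto
    moreover have "subseq [x, Suc n, y] ?p"
      using that subseq_append_Cons[of "[x]" a "[y]" b] by (simp add: subseq_singleton_left)
    ultimately have "contains ?p [2,3,1]" unfolding contains_231_iff by blast
    with avoid(3) show False ..
  qed
  obtain y where y: "y \<in> set b" using assms(3) by (meson hd_in_set)
  obtain x where x: "a = [x]"
  proof (cases a rule: remdups_adj.cases)
    case (3 x1 x2 r)
    then have "subseq [x1, x2, Suc n, y] ?p"
      using y subseq_append_Cons[of "[x1, x2]" a "[y]" b] by (simp add: subseq_singleton_left)
    moreover have "x1 \<noteq> x2" "x1 < y" "x2 < y" "y < Suc n"
      using 3 ab y below perms_le[OF ab] unfolding perms_def by fastforce+
    ultimately have "contains ?p [1,2,4,3] \<or> contains ?p [2,1,4,3]"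
      unfolding contains_1243_iff contains_2143_iff by (meson linorder_neqE_nat)
    with avoid(1,2) show ?thesis by blast
  qed (use assms(2) in auto)
  have "1 \<in> set (a @ b)" "\<forall>z \<in> set (a @ b). 1 \<le> z"
    using ab y unfolding perms_def by auto
  then show "a = [1]" using x y below by fastforce
qed

lemma Cons_1_max_av_1243_2143_231_iff:
  assumes "q \<in> perms n"
  shows "1 # Suc (Suc n) # map Suc q \<in> av_1243_2143_231 (Suc (Suc n)) \<longleftrightarrow> q \<in> av_132_231 n"
proof -
  let ?r = "map Suc q"
  have "1 # Suc (Suc n) # ?r \<in> perms (Suc (Suc n))"
    using perms_insert_max_iff[of "[1]"] Cons_1_perms_Suc_iff assms by auto
  moreover have above: "\<forall>x \<in> set (Suc (Suc n) # ?r). 1 < x" "\<forall>x \<in> set ?r. x < Suc (Suc n)"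
    using perms_le[OF assms] assms unfolding perms_def by auto
  have "contains q tau \<longleftrightarrow> contains ?r tau" for tau
    by (simp add: contains_map_strict_mono strict_mono_Suc_iff)
  moreover have "contains (1 # Suc (Suc n) # ?r) [1,2,4,3] \<longleftrightarrow> contains ?r [1,3,2]"
  proof
    assume "contains (1 # Suc (Suc n) # ?r) [1,2,4,3]"
    then show "contains ?r [1,3,2]"
      using contains_132_if_Cons_contains(1) contains_Cons_greaterD[where y = 3] above(2)
      by fastforce
  next
    assume "contains ?r [1,3,2]"
    then have "contains (Suc (Suc n) # ?r) [1,3,2]" by (rule contains_subseq) auto
    then show "contains (1 # Suc (Suc n) # ?r) [1,2,4,3]"
      using above(1) by (intro contains_1243_if_Cons_less)
  qed
  moreover have "contains (1 # Suc (Suc n) # ?r) [2,1,4,3] \<Longrightarrow> contains ?r [1,3,2]"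
    using contains_132_if_Cons_contains(2) contains_Cons_greaterD[where y = 3] above(2)
    by fastforce
  moreover have "contains (1 # Suc (Suc n) # ?r) [2,3,1] \<longleftrightarrow> contains ?r [2,3,1]"
  proof
    assume "contains (1 # Suc (Suc n) # ?r) [2,3,1]"
    then have "contains (Suc (Suc n) # ?r) [2,3,1]"
      using above(1) by (rule contains_Cons_lessD[where y = 1]) auto
    then show "contains ?r [2,3,1]" using above(2) by (rule contains_Cons_greaterD[where y = 3]) auto
  next
    assume "contains ?r [2,3,1]"
    then show "contains (1 # Suc (Suc n) # ?r) [2,3,1]" by (rule contains_subseq) auto
  qed
  ultimately show ?thesis using assms unfolding perms_avoiding_def avoids_def by auto
qed

(* The empty list is removed because av_132_231 0 = {[]}, and 1 # 2 # [] = [1] @ [2] is already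
   counted by the second term. *)
lemma av_1243_2143_231_Suc_Suc:
  "av_1243_2143_231 (Suc (Suc n)) =
     (\<lambda>p. Suc (Suc n) # p) ` av_1243_2143_231 (Suc n) \<union>
     (\<lambda>p. p @ [Suc (Suc n)]) ` av_1243_2143_231 (Suc n)
     \<union> (\<lambda>q. 1 # Suc (Suc n) # map Suc q) ` (av_132_231 n - {[]})"
  (is "?S = ?C \<union> ?L \<union> ?I")
proof
  have first: "\<forall>tau \<in> set [[1,2,4,3], [2,1,4,3], [2,3,1::nat]]. \<exists>y \<in> set tau. hd tau < y"
    and last: "\<forall>tau \<in> set [[1,2,4,3], [2,1,4,3], [2,3,1::nat]]. \<exists>y \<in> set tau. last tau < y"
    by simp_all
  have "?I \<subseteq> ?S"
    using Cons_1_max_av_1243_2143_231_iff perms_avoiding_subset by blast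
  then show "?C \<union> ?L \<union> ?I \<subseteq> ?S"
    using perms_avoiding_Cons_max_iff[OF first] perms_avoiding_snoc_max_iff[OF last] by auto
  show "?S \<subseteq> ?C \<union> ?L \<union> ?I"
  proof
    fix p assume p: "p \<in> ?S"
    from first last p show "p \<in> ?C \<union> ?L \<union> ?I"
    proof (cases rule: perms_avoiding_Suc_cases)
      case (inside a b)
      then have "a = [1]" using p av_1243_2143_231_prefix_of_max by blast
      with inside p have "1 # b \<in> perms (Suc n)"
        using perms_insert_max_iff[of "[1]" "Suc n" b] perms_avoiding_subset by fastforce
      then obtain q where "q \<in> perms n" "b = map Suc q" using Cons_1_perms_Suc_iff by blast
      with p inside \<open>a = [1]\<close> have "q \<in> av_132_231 n - {[]}"
        using Cons_1_max_av_1243_2143_231_iff by auto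
      with inside \<open>a = [1]\<close> \<open>b = map Suc q\<close> show ?thesis by auto
    qed auto
  qed
qed

lemma card_av_132_231_minus_Nil: "card (av_132_231 n - {[]}) = (if n = 0 then 0 else 2 ^ (n - 1))"
proof (cases "n = 0")
  case True
  have "av_132_231 0 \<subseteq> {[]}" using perms_avoiding_subset[of _ 0] perms_0 by blast
  then have "av_132_231 0 - {[]} = {}" by blast
  then have "card (av_132_231 0 - {[]}) = 0" by (simp only: card.empty)
  with True show ?thesis by simp
next
  case False
  then have "[] \<notin> perms n" unfolding perms_def by auto
  then have "[] \<notin> av_132_231 n" using perms_avoiding_subset by blast
  then have "card (av_132_231 n - {[]}) = card (av_132_231 n)" by (simp add: card_Diff_singleton_if)
  with False show ?thesis using card_av_132_231[of n] by simp
qed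

lemma card_av_1243_2143_231_Suc_Suc:
  "card (av_1243_2143_231 (Suc (Suc n))) =
     2 * card (av_1243_2143_231 (Suc n)) + card (av_132_231 n - {[]})"
proof -
  let ?C = "(\<lambda>p. Suc (Suc n) # p) ` av_1243_2143_231 (Suc n)"
    and ?L = "(\<lambda>p. p @ [Suc (Suc n)]) ` av_1243_2143_231 (Suc n)"
    and ?I = "(\<lambda>q. 1 # Suc (Suc n) # map Suc q) ` (av_132_231 n - {[]})"
  have fin: "finite (av_1243_2143_231 (Suc n))" "finite (av_132_231 n - {[]})"
    using finite_perms_avoiding by auto
  have "1 # Suc (Suc n) # map Suc q \<noteq> p @ [Suc (Suc n)]"
    if "p \<in> av_1243_2143_231 (Suc n)" "q \<noteq> []" for p q
  proof
    assume "1 # Suc (Suc n) # map Suc q = p @ [Suc (Suc n)]"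
    with \<open>q \<noteq> []\<close> have "Suc (Suc n) \<in> set p" by (cases p) (auto simp: Cons_eq_append_conv)
    with perms_le that(1) perms_avoiding_subset show False by fastforce
  qed
  then have "(?C \<union> ?L) \<inter> ?I = {}" by auto
  then have "card (?C \<union> ?L \<union> ?I) = card (?C \<union> ?L) + card ?I"
    using fin by (intro card_Un_disjoint) auto
  also have "card (?C \<union> ?L) = 2 * card (av_1243_2143_231 (Suc n))"
    using card_Cons_snoc_image[OF perms_avoiding_subset] by simp
  also have "card ?I = card (av_132_231 n - {[]})"
    by (rule card_image) (simp add: inj_on_def)
  finally show ?thesis by (simp only: av_1243_2143_231_Suc_Suc)
qed

lemma card_av_1243_2143_231: "2 * card (av_1243_2143_231 (Suc (Suc n))) = (n + 4) * 2 ^ n"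
proof (induction n)
  case 0
  have "card (av_1243_2143_231 1) = 1"
    using perms_avoiding_1[of "[[1,2,4,3], [2,1,4,3], [2,3,1]]"] by simp
  then show ?case using card_av_1243_2143_231_Suc_Suc[of 0] card_av_132_231_minus_Nil[of 0] by simp
next
  case (Suc n)
  have "2 * card (av_1243_2143_231 (Suc (Suc (Suc n))))
      = 2 * (2 * card (av_1243_2143_231 (Suc (Suc n))) + 2 ^ n)"
    using card_av_1243_2143_231_Suc_Suc[of "Suc n"] card_av_132_231_minus_Nil[of "Suc n"] by simp
  also have "\<dots> = (Suc n + 4) * 2 ^ Suc n"
    unfolding Suc.IH by (simp add: algebra_simps)
  finally show ?case .
qed

theorem corollary3p14:
  fixes n :: nat
  assumes "n \<ge> 2"
  shows "real (card {p \<in> perms n. avoids p [1,2,4,3] \<and> avoids p [2,1,4,3] \<and> avoids p [2,3,1]})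
           = (real n + 2) * 2 powi (int n - 3)"
proof -
  define m where "m = n - 2"
  with assms have n: "n = Suc (Suc m)" by simp
  have avoiders: "{p \<in> perms n. avoids p [1,2,4,3] \<and> avoids p [2,1,4,3] \<and> avoids p [2,3,1]}
      = av_1243_2143_231 n"
    unfolding perms_avoiding_def by auto
  have powi: "2 * (2::real) powi (int n - 3) = 2 ^ m"
    unfolding n by (simp add: power_int_diff)
  have "2 * real (card (av_1243_2143_231 n)) = (real m + 4) * 2 ^ m"
    using arg_cong[OF card_av_1243_2143_231[of m], of real] unfolding n by simp
  also have "\<dots> = 2 * ((real n + 2) * 2 powi (int n - 3))"
    unfolding powi[symmetric] n by (simp add: algebra_simps)
  finally show ?thesis unfolding avoiders by simp
qed

end
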